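(* Let $A,B,C\in\mathfrak{sl}_4(\mathbb R)$ be pairwise commuting symmetric matrices. Then the $G_2$-structure $(G_{A,B,C},\varphi)$ is equivalent to $(G_{A_1,B_1,C_1},\varphi)$ for some diagonal matrices $A_1,B_1,C_1\in\mathfrak{sl}_4(\mathbb R)$.
   Context: For pairwise commuting $A,B,C\in\mathfrak{sl}_4(\mathbb R)$, $\mathfrak g_{A,B,C}$ is the 7-dimensional Lie algebra with basis $\{e_1,\dots,e_7\}$ in which $\mathfrak a=\langle e_7,e_1,e_2\rangle$ is an abelian subalgebra, $\mathfrak n=\langle e_3,e_4,e_5,e_6\rangle$ is an abelian ideal, and in the basis $\{e_3,\dots,e_6\}$ one has $\mathrm{ad}\,e_7|_{\mathfrak n}=A$, $\mathrm{ad}\,e_1|_{\mathfrak n}=B$, $\mathrm{ad}\,e_2|_{\mathfrak n}=C$; $G_{A,B,C}$ is the corresponding simply connected Lie group, endowed with the left-invariant $G_2$-structure given by the positive 3-form $\varphi=e^{127}+e^{347}+e^{567}+e^{135}-e^{146}-e^{236}-e^{245}$ ($\{e^i\}$ the dual basis). Two $G_2$-structures $(M,\varphi)$, $(M',\varphi')$ are equivalent if there is a diffeomorphism $f:M\to M'$ with $f^*\varphi'=\varphi$. *)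

theory Defs
  imports "HOL-Analysis.Analysis"
begin

fun partials :: "('a::euclidean_space \<Rightarrow> 'b::euclidean_space) \<Rightarrow> nat \<Rightarrow> ('a \<Rightarrow> 'b) set" where
  "partials f 0 = {f}"
| "partials f (Suc n) =
     {h. \<exists>g\<in>partials f n. \<exists>i\<in>Basis.
           \<forall>x. ((\<lambda>t. g (x + t *\<^sub>R i)) has_vector_derivative h x) (at 0)}"

definition smooth_map :: "('a::euclidean_space \<Rightarrow> 'b::euclidean_space) \<Rightarrow> bool" where
  "smooth_map f \<longleftrightarrow>
     (\<forall>n. \<forall>g\<in>partials f n. continuous_on UNIV g \<and>
        (\<forall>i\<in>Basis. \<exists>h. \<forall>x. ((\<lambda>t. g (x + t *\<^sub>R i)) has_vector_derivative h x) (at 0)))"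

definition diffeomorphism :: "('a::euclidean_space \<Rightarrow> 'a) \<Rightarrow> bool" where
  "diffeomorphism f \<longleftrightarrow> bij f \<and> smooth_map f \<and> smooth_map (inv f)"

text \<open>Points of G are pairs (s,v) with s in R^3 and v in R^4.  The coordinates of s are
  (x7, x1, x2) (coordinates w.r.t. e7, e1, e2 spanning the abelian subalgebra a),
  and the coordinates of v are (x3, x4, x5, x6) (w.r.t. e3..e6 spanning n).\<close>
type_synonym pt = "(real^3) \<times> (real^4)"

fun matpow :: "real^4^4 \<Rightarrow> nat \<Rightarrow> real^4^4" where
  "matpow M 0 = mat 1"
| "matpow M (Suc k) = M ** matpow M k"

definition mexp :: "real^4^4 \<Rightarrow> real^4^4" where
  "mexp M = (\<Sum>k. (1 / fact k) *\<^sub>R matpow M k)"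

definition Mof :: "real^4^4 \<Rightarrow> real^4^4 \<Rightarrow> real^4^4 \<Rightarrow> real^3 \<Rightarrow> real^4^4" where
  "Mof A B C s = s$0 *\<^sub>R A + s$1 *\<^sub>R B + s$2 *\<^sub>R C"

text \<open>Simply connected group R^3 \<ltimes> R^4 integrating a \<ltimes> n, with a acting by
  ad e7 = A, ad e1 = B, ad e2 = C.\<close>
definition gmult :: "real^4^4 \<Rightarrow> real^4^4 \<Rightarrow> real^4^4 \<Rightarrow> pt \<Rightarrow> pt \<Rightarrow> pt" where
  "gmult A B C g h = (fst g + fst h, snd g + mexp (Mof A B C (fst g)) *v snd h)"

definition ginv :: "real^4^4 \<Rightarrow> real^4^4 \<Rightarrow> real^4^4 \<Rightarrow> pt \<Rightarrow> pt" where
  "ginv A B C g = (- fst g, - (mexp (Mof A B C (- fst g)) *v snd g))"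

fun ecoord :: "nat \<Rightarrow> pt \<Rightarrow> real" where
  "ecoord k u =
     (if k = 7 then fst u $ 0 else if k = 1 then fst u $ 1 else if k = 2 then fst u $ 2
      else if k = 3 then snd u $ 0 else if k = 4 then snd u $ 1
      else if k = 5 then snd u $ 2 else if k = 6 then snd u $ 3 else 0)"

definition wedge3 :: "nat \<Rightarrow> nat \<Rightarrow> nat \<Rightarrow> pt \<Rightarrow> pt \<Rightarrow> pt \<Rightarrow> real" where
  "wedge3 i j k u v w =
      ecoord i u * (ecoord j v * ecoord k w - ecoord k v * ecoord j w)
    - ecoord i v * (ecoord j u * ecoord k w - ecoord k u * ecoord j w)
    + ecoord i w * (ecoord j u * ecoord k v - ecoord k u * ecoord j v)"

definition phi0 :: "pt \<Rightarrow> pt \<Rightarrow> pt \<Rightarrow> real" where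
  "phi0 u v w = wedge3 1 2 7 u v w + wedge3 3 4 7 u v w + wedge3 5 6 7 u v w
     + wedge3 1 3 5 u v w - wedge3 1 4 6 u v w - wedge3 2 3 6 u v w - wedge3 2 4 5 u v w"

definition phiG :: "real^4^4 \<Rightarrow> real^4^4 \<Rightarrow> real^4^4 \<Rightarrow> pt \<Rightarrow> pt \<Rightarrow> pt \<Rightarrow> pt \<Rightarrow> real" where
  "phiG A B C g u v w =
     (let D = frechet_derivative (gmult A B C (ginv A B C g)) (at g)
      in phi0 (D u) (D v) (D w))"

definition G2_equivalent ::
  "real^4^4 \<Rightarrow> real^4^4 \<Rightarrow> real^4^4 \<Rightarrow> real^4^4 \<Rightarrow> real^4^4 \<Rightarrow> real^4^4 \<Rightarrow> bool" where
  "G2_equivalent A B C A' B' C' \<longleftrightarrow>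
     (\<exists>f::pt \<Rightarrow> pt. diffeomorphism f \<and>
        (\<forall>x u v w. let D = frechet_derivative f (at x) in
            phiG A' B' C' (f x) (D u) (D v) (D w) = phiG A B C x u v w))"

definition sl4 :: "real^4^4 \<Rightarrow> bool" where
  "sl4 M \<longleftrightarrow> trace M = 0"

definition symmetric_mat :: "real^4^4 \<Rightarrow> bool" where
  "symmetric_mat M \<longleftrightarrow> transpose M = M"

definition diagonal_mat :: "real^4^4 \<Rightarrow> bool" where
  "diagonal_mat M \<longleftrightarrow> (\<forall>i j. i \<noteq> j \<longrightarrow> M $ i $ j = 0)"

definition commute :: "real^4^4 \<Rightarrow> real^4^4 \<Rightarrow> bool" where
  "commute M N \<longleftrightarrow> M ** N = N ** M"

end

theory Submission
  imports Defs
begin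

text \<open>
Commuting symmetric matrices have a common orthonormal eigenbasis, so some orthogonal P conjugates
A, B and C to diagonal matrices.  For orthogonal R and P the linear map (s, v) \<mapsto> (R s, P v)
intertwines the multiplication of G_{A,B,C} with that of the group whose ad-matrices are the
P-conjugates of the R-recombined triple, so it pulls the left-invariant phi back to phi as soon as it
preserves phi at the identity.  Such an R exists for every P: write phi with the self-dual forms
omega_i on n; P factors as right multiplication by a unit quaternion, which fixes every omega_i,
followed by a rotation Q of e4, e5, e6 fixing e3, which phi only sees as the simultaneous rotation
of (x7, x1, -x2) and (x4, x5, x6) and which a matching R on a undoes.  This needs det Q = 1, which
reversing the last eigenvector achieves.
\<close>

section \<open>Smooth linear maps\<close>

lemma has_vector_derivative_affine_line:
  assumes "linear L"
  shows "((\<lambda>t. L (x + t *\<^sub>R i) + c) has_vector_derivative L i) (at 0)"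
proof -
  have eq: "(\<lambda>t. L (x + t *\<^sub>R i) + c) = (\<lambda>t. (L x + c) + t *\<^sub>R L i)"
    using assms by (auto simp: linear_add linear_scale algebra_simps)
  show ?thesis unfolding eq by (auto intro!: derivative_eq_intros)
qed

lemma partials_of_linear:
  fixes f :: "'a::euclidean_space \<Rightarrow> 'b::euclidean_space"
  assumes "linear f" and "g \<in> partials f n"
  shows "\<exists>L c. linear L \<and> g = (\<lambda>x. L x + c)"
  using assms(2)
proof (induction n arbitrary: g)
  case 0
  then show ?case using assms(1) by (auto intro!: exI[of _ f] exI[of _ 0])
next
  case (Suc n)
  then obtain g0 i where "g0 \<in> partials f n"
    and g: "\<And>x. ((\<lambda>t. g0 (x + t *\<^sub>R i)) has_vector_derivative g x) (at 0)" by auto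
  then obtain L c where L: "linear L" "g0 = (\<lambda>x. L x + c)" using Suc.IH by blast
  have "g x = L i" for x
    using g[of x] has_vector_derivative_affine_line[OF L(1)] vector_derivative_unique_at
    unfolding L(2) by metis
  then have "g = (\<lambda>x. (\<lambda>_. 0) x + L i)" by auto
  then show ?case using linear_zero by blast
qed

lemma smooth_map_linear:
  fixes f :: "'a::euclidean_space \<Rightarrow> 'b::euclidean_space"
  assumes "linear f"
  shows "smooth_map f"
  unfolding smooth_map_def
proof (intro allI ballI conjI)
  fix n g assume "g \<in> partials f n"
  then obtain L c where L: "linear L" "g = (\<lambda>x. L x + c)"
    using partials_of_linear[OF assms] by blast
  have "continuous_on UNIV L"
    using L(1) by (simp add: linear_continuous_on linear_conv_bounded_linear)
  then show "continuous_on UNIV g"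
    unfolding L(2) by (intro continuous_on_add continuous_on_const)
  show "\<exists>h. \<forall>x. ((\<lambda>t. g (x + t *\<^sub>R i)) has_vector_derivative h x) (at 0)" for i
    unfolding L(2) by (intro exI[of _ "\<lambda>_. L i"] allI has_vector_derivative_affine_line[OF L(1)])
qed

lemma diffeomorphism_linear:
  fixes f :: "'a::euclidean_space \<Rightarrow> 'a"
  assumes "linear f" and "bij f"
  shows "diffeomorphism f"
  using assms
  by (simp add: diffeomorphism_def smooth_map_linear bij_is_inj inj_linear_imp_inv_linear)

lemma three_eq_zero: "(3::3) = 0" by simp

lemma four_eq_zero: "(4::4) = 0" by simp

(* Defs indexes the coordinates of real^3 and real^4 from 0, whereas sum_3, forall_3, sum_4 and
   forall_4 of the library count from 1 (so 3 = 0 in the type 3, and 4 = 0 in the type 4). *)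
lemma sum_3_from_0: "sum f (UNIV::3 set) = f 0 + f 1 + f 2"
  using sum_3[of f] by (simp add: three_eq_zero ac_simps)

lemma forall_3_from_0: "(\<forall>i::3. P i) \<longleftrightarrow> P 0 \<and> P 1 \<and> P 2"
  using forall_3[of P] by (auto simp: three_eq_zero)

lemma sum_4_from_0: "sum f (UNIV::4 set) = f 0 + f 1 + f 2 + f 3"
  using sum_4[of f] by (simp add: four_eq_zero ac_simps)

lemma forall_4_from_0: "(\<forall>i::4. P i) \<longleftrightarrow> P 0 \<and> P 1 \<and> P 2 \<and> P 3"
  using forall_4[of P] by (auto simp: four_eq_zero)

lemma matrix_add_rdistrib: "(B + C) ** A = B ** A + C ** (A::real^'k^'n)"
  by (vector matrix_matrix_mult_def sum.distrib[symmetric] field_simps)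

lemma linear_matrix_conj: "linear (\<lambda>X::real^'k^'n. (P::real^'n^'m) ** X ** (Q::real^'l^'k))"
  by (simp add: linear_iff matrix_add_ldistrib matrix_add_rdistrib matrix_scalar_ac scalar_matrix_assoc)

lemma matrix_mult_nth: "(X ** Y) $ i = X $ i v* Y" for X :: "real^'n^'m"
  by (auto simp: vec_eq_iff matrix_matrix_mult_def vector_matrix_mult_def
      intro!: sum.cong mult.commute)

lemma matrix_mult_transpose_nth: "(X ** transpose Y) $ i = Y *v X $ i" for X :: "real^'n^'m"
  by (auto simp: vec_eq_iff matrix_matrix_mult_def matrix_vector_mult_def transpose_def
      intro!: sum.cong mult.commute)

lemma matrix_conj_transpose_nth:
  "(P ** X ** transpose P) $ i $ j = P $ i \<bullet> (X *v P $ j)" for P :: "real^'n^'m"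
proof -
  have "(P ** X ** transpose P) $ i $ j = P $ j \<bullet> (P $ i v* X)"
    by (simp add: matrix_mult_transpose_nth matrix_vector_mul_component matrix_mult_nth)
  also have "\<dots> = P $ i \<bullet> (X *v P $ j)"
    by (metis inner_commute dot_lmul_matrix)
  finally show ?thesis .
qed

lemma diagonal_mat_mult_nth:
  assumes "diagonal_mat D"
  shows "(D ** P) $ i = D $ i $ i *\<^sub>R P $ i"
proof -
  have "(\<Sum>k\<in>UNIV. D $ i $ k * P $ k $ j)
      = (\<Sum>k\<in>UNIV. if k = i then D $ i $ i * P $ i $ j else 0)" for j
    using assms by (intro sum.cong) (auto simp: diagonal_mat_def)
  then show ?thesis
    by (simp add: vec_eq_iff matrix_matrix_mult_def)
qed

lemma inner_orthogonal_matrix: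
  assumes "orthogonal_matrix Q"
  shows "(Q *v x) \<bullet> (Q *v y) = x \<bullet> (y::real^'n)"
  using assms orthogonal_transformation_matrix[of "(*v) Q"]
  by (simp add: matrix_of_matrix_vector_mul orthogonal_transformation_def)

lemma trace_scaleR: "trace (c *\<^sub>R M) = c * trace (M::real^'n^'n)"
  by (simp add: trace_def sum_distrib_left)

lemma trace_orthogonal_conj:
  fixes P X :: "real^'n^'n"
  assumes "orthogonal_matrix P"
  shows "trace (P ** X ** transpose P) = trace X"
proof -
  have "trace (P ** X ** transpose P) = trace (transpose P ** (P ** X))"
    by (rule trace_mul_sym)
  also have "\<dots> = trace X"
    using assms by (simp add: matrix_mul_assoc orthogonal_matrix_def)
  finally show ?thesis .
qed

section \<open>The matrix exponential\<close>

lemma summable_mexp: "summable (\<lambda>k. (1 / fact k) *\<^sub>R matpow M k)"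
proof -
  have "bounded_linear (\<lambda>X::real^4^4. M ** X)"
    using linear_matrix_conj[of M "mat 1"] by (simp add: linear_conv_bounded_linear)
  then obtain K where K: "K > 0" "\<And>X::real^4^4. norm (M ** X) \<le> norm X * K"
    using bounded_linear.pos_bounded by blast
  have bound: "norm (matpow M k) \<le> K ^ k * norm (mat 1 :: real^4^4)" for k
  proof (induction k)
    case (Suc k)
    have "norm (matpow M (Suc k)) \<le> norm (matpow M k) * K" using K(2) by simp
    also have "\<dots> \<le> K ^ k * norm (mat 1 :: real^4^4) * K"
      using Suc K(1) by (simp add: mult_right_mono)
    finally show ?case by (simp add: mult_ac)
  qed simp
  have "summable (\<lambda>k. inverse (fact k) * K ^ k * norm (mat 1 :: real^4^4))"
    by (intro summable_mult2 summable_exp)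
  then show ?thesis
    by (rule summable_comparison_test[rotated])
      (use bound in \<open>auto simp: divide_inverse mult.assoc intro!: mult_left_mono exI[of _ 0]\<close>)
qed

lemma matpow_conj:
  assumes "P' ** P = mat 1" and "P ** P' = mat 1"
  shows "matpow (P ** X ** P') k = P ** matpow X k ** P'"
proof (induction k)
  case (Suc k)
  have "P ** X ** P' ** (P ** matpow X k ** P') = P ** X ** (P' ** P) ** matpow X k ** P'"
    by (simp add: matrix_mul_assoc)
  then show ?case using Suc assms(1) by (simp add: matrix_mul_assoc)
qed (simp add: assms(2))

lemma mexp_conj:
  assumes "P' ** P = mat 1" and "P ** P' = mat 1"
  shows "mexp (P ** X ** P') = P ** mexp X ** P'"
proof -
  have "bounded_linear (\<lambda>Y::real^4^4. P ** Y ** P')"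
    using linear_matrix_conj linear_conv_bounded_linear by blast
  then have "P ** mexp X ** P' = (\<Sum>k. P ** ((1 / fact k) *\<^sub>R matpow X k) ** P')"
    unfolding mexp_def by (rule bounded_linear.suminf[OF _ summable_mexp])
  also have "\<dots> = (\<Sum>k. (1 / fact k) *\<^sub>R matpow (P ** X ** P') k)"
    by (simp add: matpow_conj[OF assms] matrix_scalar_ac scalar_matrix_assoc)
  finally show ?thesis unfolding mexp_def by simp
qed

section \<open>Block maps between the groups\<close>

lemma gmult_has_derivative:
  "(gmult A B C g has_derivative (\<lambda>h. (fst h, mexp (Mof A B C (fst g)) *v snd h))) (at x)"
proof -
  let ?L = "\<lambda>h::pt. (fst h, mexp (Mof A B C (fst g)) *v snd h)"
  have "bounded_linear ?L"
    by (intro bounded_linear_Pair bounded_linear_compose[OF matrix_vector_mul_bounded_linear]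
        bounded_linear_fst bounded_linear_snd)
  moreover have "gmult A B C g = (\<lambda>h. ?L h + g)"
    by (simp add: gmult_def fun_eq_iff prod_eq_iff add.commute)
  ultimately show ?thesis
    by (simp add: has_derivative_add_const bounded_linear_imp_has_derivative)
qed

lemma phiG_eq_phi0:
  "phiG A B C g u v w =
     (let D = \<lambda>h. (fst h, mexp (Mof A B C (- fst g)) *v snd h) in phi0 (D u) (D v) (D w))"
proof -
  have "frechet_derivative (gmult A B C (ginv A B C g)) (at g)
      = (\<lambda>h. (fst h, mexp (Mof A B C (- fst g)) *v snd h))"
    using frechet_derivative_at[OF gmult_has_derivative] by (simp add: ginv_def)
  then show ?thesis by (simp add: phiG_def)
qed

definition block_map :: "real^3^3 \<Rightarrow> real^4^4 \<Rightarrow> pt \<Rightarrow> pt" where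
  "block_map R P u = (R *v fst u, P *v snd u)"

lemma linear_block_map: "linear (block_map R P)"
  unfolding block_map_def linear_conv_bounded_linear
  by (intro bounded_linear_Pair bounded_linear_compose[OF matrix_vector_mul_bounded_linear]
      bounded_linear_fst bounded_linear_snd)

lemma block_map_mult: "block_map (R' ** R) (P' ** P) u = block_map R' P' (block_map R P u)"
  by (simp add: block_map_def matrix_vector_mul_assoc)

lemma frechet_derivative_block_map: "frechet_derivative (block_map R P) (at x) = block_map R P"
  using linear_block_map
  by (simp add: frechet_derivative_at[symmetric] linear_conv_bounded_linear
      bounded_linear_imp_has_derivative)

lemma diffeomorphism_block_map:
  assumes "orthogonal_matrix R" and "orthogonal_matrix P"
  shows "diffeomorphism (block_map R P)"
proof (rule diffeomorphism_linear[OF linear_block_map])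
  let ?inv = "block_map (transpose R) (transpose P)"
  have "?inv \<circ> block_map R P = id" "block_map R P \<circ> ?inv = id"
    using assms by (simp_all add: fun_eq_iff orthogonal_matrix_def flip: block_map_mult,
        simp_all add: block_map_def)
  then show "bij (block_map R P)" by (rule o_bij)
qed

definition preserves_phi0 :: "(pt \<Rightarrow> pt) \<Rightarrow> bool" where
  "preserves_phi0 f \<longleftrightarrow> (\<forall>u v w. phi0 (f u) (f v) (f w) = phi0 u v w)"

lemma preserves_phi0_comp:
  "preserves_phi0 f \<Longrightarrow> preserves_phi0 g \<Longrightarrow> preserves_phi0 (f \<circ> g)"
  unfolding preserves_phi0_def comp_def by metis

lemma G2_equivalent_block_map:
  assumes R: "orthogonal_matrix R" and P: "orthogonal_matrix P"
    and phi0: "preserves_phi0 (block_map R P)"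
    and ad: "\<And>s. Mof A1 B1 C1 (R *v s) = P ** Mof A B C s ** transpose P"
  shows "G2_equivalent A B C A1 B1 C1"
  unfolding G2_equivalent_def
proof (intro exI[of _ "block_map R P"] conjI allI)
  show "diffeomorphism (block_map R P)" using R P by (rule diffeomorphism_block_map)
  fix x u v w :: pt
  let ?E = "mexp (Mof A B C (- fst x))"
  have "mexp (Mof A1 B1 C1 (- fst (block_map R P x))) = P ** ?E ** transpose P"
    using ad[of "- fst x"] P
    by (simp add: block_map_def vec.neg mexp_conj orthogonal_matrix_def)
  \<comment> \<open>so block_map R P intertwines the derivatives of the left translations by x and its image\<close>
  then have "(fst (block_map R P h),
        mexp (Mof A1 B1 C1 (- fst (block_map R P x))) *v snd (block_map R P h))
      = block_map R P (fst h, ?E *v snd h)" for h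
    using P by (simp add: block_map_def matrix_vector_mul_assoc orthogonal_matrix_def
        flip: matrix_mul_assoc)
  then show "let D = frechet_derivative (block_map R P) (at x)
      in phiG A1 B1 C1 (block_map R P x) (D u) (D v) (D w) = phiG A B C x u v w"
    using phi0 by (simp add: frechet_derivative_block_map phiG_eq_phi0 preserves_phi0_def)
qed

section \<open>Simultaneous diagonalisation\<close>

lemma quadratic_nonpos_imp_linear_coeff_zero:
  fixes c d :: real
  assumes "\<And>t. 2*t*c + t^2*d \<le> 0"
  shows "c = 0"
proof (rule ccontr)
  assume "c \<noteq> 0"
  define k where "k = \<bar>d\<bar> + 1"
  have k: "k > 0" "4*k + d > 0" unfolding k_def by auto
  define t where "t = c / (2*k)"
  have "0 < c^2 / (4*k^2) * (4*k + d)"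
    using \<open>c \<noteq> 0\<close> k by (intro mult_pos_pos divide_pos_pos) auto
  also have "\<dots> = 2*t*c + t^2*d"
    unfolding t_def using k by (simp add: field_simps power2_eq_square)
  finally show False using assms[of t] by linarith
qed

definition self_adjoint :: "('a::real_inner \<Rightarrow> 'a) \<Rightarrow> bool" where
  "self_adjoint f \<longleftrightarrow> linear f \<and> (\<forall>x y. f x \<bullet> y = x \<bullet> f y)"

(* The maximum of the Rayleigh quotient on the unit sphere of S is attained at an eigenvector. *)
lemma self_adjoint_eigenvector:
  fixes f :: "'a::euclidean_space \<Rightarrow> 'a"
  assumes f: "self_adjoint f" and S: "subspace S" and v: "v \<in> S" "v \<noteq> 0"
    and inv: "\<And>x. x \<in> S \<Longrightarrow> f x \<in> S"
  shows "\<exists>x\<in>S. x \<noteq> 0 \<and> (\<exists>\<mu>. f x = \<mu> *\<^sub>R x)"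
proof -
  have lin: "linear f" and sym: "\<And>x y. f x \<bullet> y = x \<bullet> f y"
    using f by (auto simp: self_adjoint_def)
  let ?K = "S \<inter> sphere 0 1"
  let ?q = "\<lambda>x. x \<bullet> f x"
  have f_cont: "continuous_on UNIV f"
    using lin by (simp add: linear_continuous_on linear_conv_bounded_linear)
  have cont: "continuous_on ?K ?q"
    by (intro continuous_intros continuous_on_subset[OF f_cont]) auto
  have "compact ?K" using closed_subspace[OF S] by (intro closed_Int_compact compact_sphere)
  moreover have "v /\<^sub>R norm v \<in> ?K" using v S by (auto simp: subspace_scale)
  ultimately obtain x0 where "x0 \<in> ?K" and max: "\<And>y. y \<in> ?K \<Longrightarrow> ?q y \<le> ?q x0"
    using continuous_attains_sup[OF _ _ cont] by blast
  then have x0: "x0 \<in> S" "norm x0 = 1" by auto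
  define l where "l = ?q x0"
  have x0x0: "x0 \<bullet> x0 = 1" using x0(2) by (simp add: norm_eq_1)
  have fscale: "f (c *\<^sub>R x) = c *\<^sub>R f x" and fadd: "f (x + y) = f x + f y" for c x y
    using lin by (simp_all add: linear_scale linear_add)
  have rayleigh: "?q z \<le> l * (norm z)^2" if "z \<in> S" for z
  proof (cases "z = 0")
    case True then show ?thesis using lin by (simp add: linear_0)
  next
    case False
    have "z /\<^sub>R norm z \<in> ?K" using that False S by (auto simp: subspace_scale)
    then have "?q (z /\<^sub>R norm z) \<le> l" unfolding l_def by (rule max)
    moreover have "?q (z /\<^sub>R norm z) = ?q z / (norm z)^2"
      by (simp add: fscale power2_eq_square divide_inverse inverse_mult_distrib mult_ac)
    ultimately show ?thesis using False by (simp add: divide_le_eq mult.commute)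
  qed
  \<comment> \<open>t = 0 maximises q (x0 + t y) - l |x0 + t y|^2, so its first-order term vanishes\<close>
  have stationary: "y \<bullet> f x0 = 0" if y: "y \<in> S" "y \<bullet> x0 = 0" for y
  proof (rule quadratic_nonpos_imp_linear_coeff_zero[where d = "?q y - l * (norm y)^2"])
    fix t :: real
    have "x0 + t *\<^sub>R y \<in> S" using S x0(1) y by (simp add: subspace_add subspace_scale)
    moreover have "?q (x0 + t *\<^sub>R y) = l + 2*t*(y \<bullet> f x0) + t^2 * ?q y"
      unfolding l_def using sym[of x0 y]
      by (simp add: fadd fscale inner_add_left inner_add_right power2_eq_square algebra_simps inner_commute)
    moreover have "(norm (x0 + t *\<^sub>R y))^2 = x0 \<bullet> x0 + 2*t*(y \<bullet> x0) + t^2 * (y \<bullet> y)"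
      unfolding power2_norm_eq_inner
      by (simp add: inner_add_left inner_add_right inner_commute power2_eq_square algebra_simps)
    then have "(norm (x0 + t *\<^sub>R y))^2 = 1 + t^2 * (norm y)^2"
      using x0x0 y(2) by (simp add: power2_norm_eq_inner)
    ultimately show "2*t*(y \<bullet> f x0) + t^2 * (?q y - l * (norm y)^2) \<le> 0"
      using rayleigh[of "x0 + t *\<^sub>R y"] by (simp add: algebra_simps)
  qed
  define z where "z = f x0 - l *\<^sub>R x0"
  have "z \<in> S" unfolding z_def using S x0(1) inv[OF x0(1)] by (simp add: subspace_diff subspace_scale)
  moreover have zx0: "z \<bullet> x0 = 0"
  proof -
    have "z \<bullet> x0 = f x0 \<bullet> x0 - l * (x0 \<bullet> x0)" unfolding z_def by (simp add: inner_diff_left)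
    also have "\<dots> = 0" using x0x0 by (simp add: l_def inner_commute)
    finally show ?thesis .
  qed
  ultimately have "z \<bullet> f x0 = 0" by (rule stationary)
  then have "z \<bullet> z = 0" using zx0 unfolding z_def by (simp add: inner_diff_right)
  then have "f x0 = l *\<^sub>R x0" unfolding z_def by simp
  then show ?thesis using x0 by (intro bexI[of _ x0]) auto
qed

lemma commuting_self_adjoint_common_eigenvector:
  fixes F :: "('a::euclidean_space \<Rightarrow> 'a) set"
  assumes "finite F" and "\<forall>f\<in>F. self_adjoint f" and "\<forall>f\<in>F. \<forall>g\<in>F. f \<circ> g = g \<circ> f"
    and "subspace S" and "v \<in> S" and "v \<noteq> 0" and "\<forall>f\<in>F. \<forall>x\<in>S. f x \<in> S"
  shows "\<exists>x\<in>S. x \<noteq> 0 \<and> (\<forall>f\<in>F. \<exists>\<mu>. f x = \<mu> *\<^sub>R x)"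
  using assms
proof (induction F arbitrary: S v rule: finite_induct)
  case empty
  then show ?case by auto
next
  case (insert g F)
  then obtain x1 \<mu> where x1: "x1 \<in> S" "x1 \<noteq> 0" "g x1 = \<mu> *\<^sub>R x1"
    using self_adjoint_eigenvector[of g S v] by auto
  define S1 where "S1 = {x\<in>S. g x = \<mu> *\<^sub>R x}"
  have lin: "linear f" if "f \<in> insert g F" for f
    using insert.prems(1) that unfolding self_adjoint_def by blast
  have "subspace S1"
    using insert.prems(3) lin[of g] unfolding S1_def subspace_def
    by (auto simp: linear_0 linear_add linear_scale algebra_simps)
  moreover have "\<forall>f\<in>F. \<forall>x\<in>S1. f x \<in> S1"
  proof (intro ballI)
    fix f x assume f: "f \<in> F" and x: "x \<in> S1"
    have "g (f x) = f (g x)" using insert.prems(2) f by (auto simp: fun_eq_iff)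
    also have "\<dots> = \<mu> *\<^sub>R f x" using x lin[of f] f by (simp add: S1_def linear_scale)
    finally show "f x \<in> S1" using insert.prems(6) f x by (simp add: S1_def)
  qed
  moreover have "x1 \<in> S1" using x1 by (simp add: S1_def)
  ultimately obtain x where "x \<in> S1" "x \<noteq> 0" "\<forall>f\<in>F. \<exists>\<mu>. f x = \<mu> *\<^sub>R x"
    using insert.IH[of S1 x1] insert.prems(1,2) x1(2) by auto
  then show ?case by (intro bexI[of _ x]) (auto simp: S1_def)
qed

lemma commuting_self_adjoint_orthonormal_eigenbasis:
  fixes F :: "('a::euclidean_space \<Rightarrow> 'a) set"
  assumes F: "finite F" "\<forall>f\<in>F. self_adjoint f" "\<forall>f\<in>F. \<forall>g\<in>F. f \<circ> g = g \<circ> f"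
    and "subspace S" and "\<forall>f\<in>F. \<forall>x\<in>S. f x \<in> S"
  shows "\<exists>B. finite B \<and> B \<subseteq> S \<and> S \<subseteq> span B \<and> pairwise orthogonal B \<and>
    (\<forall>x\<in>B. norm x = 1 \<and> (\<forall>f\<in>F. \<exists>\<mu>. f x = \<mu> *\<^sub>R x))"
  using assms(4,5)
proof (induction "dim S" arbitrary: S rule: less_induct)
  case less
  show ?case
  proof (cases "S \<subseteq> {0}")
    case True
    then show ?thesis by (intro exI[of _ "{}"]) auto
  next
    case False
    then obtain x where x: "x \<in> S" "x \<noteq> 0" "\<forall>f\<in>F. \<exists>\<mu>. f x = \<mu> *\<^sub>R x"
      using commuting_self_adjoint_common_eigenvector[OF F less.prems(1) _ _ less.prems(2)] by blast
    define u where "u = x /\<^sub>R norm x"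
    have uS: "u \<in> S" unfolding u_def using x less.prems(1) by (simp add: subspace_scale)
    have nu: "norm u = 1" unfolding u_def using x by simp
    then have uu: "u \<bullet> u = 1" by (simp add: norm_eq_1)
    have ue: "\<forall>f\<in>F. \<exists>\<mu>. f u = \<mu> *\<^sub>R u"
      using x(3) F(2) unfolding u_def by (force simp: self_adjoint_def linear_scale)
    define S' where "S' = {y\<in>S. u \<bullet> y = 0}"
    have sub': "subspace S'"
      using less.prems(1) unfolding S'_def subspace_def by (auto simp: inner_add_right)
    have inv': "\<forall>f\<in>F. \<forall>y\<in>S'. f y \<in> S'"
    proof (intro ballI)
      fix f y assume f: "f \<in> F" and y: "y \<in> S'"
      obtain \<mu> where "f u = \<mu> *\<^sub>R u" using ue f by auto
      moreover have "u \<bullet> f y = f u \<bullet> y" using F(2) f by (simp add: self_adjoint_def)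
      ultimately show "f y \<in> S'" using less.prems(2) f y by (auto simp: S'_def)
    qed
    have "u \<notin> S'" using uu by (simp add: S'_def)
    then have "S' \<subset> S" using uS unfolding S'_def by blast
    then have "span S' \<subset> span S" using sub' less.prems(1) by (metis span_eq_iff)
    then have "dim S' < dim S" by (rule dim_psubset)
    then obtain B' where B': "finite B'" "B' \<subseteq> S'" "S' \<subseteq> span B'" "pairwise orthogonal B'"
      "\<forall>x\<in>B'. norm x = 1 \<and> (\<forall>f\<in>F. \<exists>\<mu>. f x = \<mu> *\<^sub>R x)"
      using less.hyps[OF _ sub' inv'] by blast
    show ?thesis
    proof (intro exI[of _ "insert u B'"] conjI)
      show "S \<subseteq> span (insert u B')"
      proof
        fix y assume y: "y \<in> S"
        have "y - (u \<bullet> y) *\<^sub>R u \<in> S'" using y uS less.prems(1) uu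
          by (simp add: S'_def subspace_diff subspace_scale inner_diff_right)
        then have "y - (u \<bullet> y) *\<^sub>R u \<in> span (insert u B')"
          using B'(3) span_mono[of B' "insert u B'"] by auto
        then have "(y - (u \<bullet> y) *\<^sub>R u) + (u \<bullet> y) *\<^sub>R u \<in> span (insert u B')"
          by (rule span_add[OF _ span_scale[OF span_base[OF insertI1]]])
        then show "y \<in> span (insert u B')" by simp
      qed
      show "pairwise orthogonal (insert u B')"
        using B'(2,4) by (auto simp: pairwise_insert S'_def orthogonal_def inner_commute)
    qed (use B' uS nu ue in \<open>auto simp: S'_def\<close>)
  qed
qed

lemma self_adjoint_symmetric_matrix:
  fixes M :: "real^'n^'n"
  assumes "transpose M = M"
  shows "self_adjoint ((*v) M)"
  using assms transpose_matrix_vector[of M] by (simp add: self_adjoint_def dot_lmul_matrix)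

lemma commuting_symmetric_matrices_orthonormal_eigenrows:
  fixes \<M> :: "(real^'n^'n) set"
  assumes "finite \<M>" and "\<forall>M\<in>\<M>. transpose M = M" and "\<forall>M\<in>\<M>. \<forall>N\<in>\<M>. M ** N = N ** M"
  obtains P where "orthogonal_matrix P" and "\<forall>M\<in>\<M>. \<forall>i. \<exists>\<mu>. M *v P $ i = \<mu> *\<^sub>R P $ i"
proof -
  let ?F = "(\<lambda>M. (*v) M) ` \<M>"
  have "\<forall>f\<in>?F. \<forall>g\<in>?F. f \<circ> g = g \<circ> f"
    using assms(3) by (auto simp: fun_eq_iff matrix_vector_mul_assoc)
  then obtain B where B: "finite B" "UNIV \<subseteq> span B" "pairwise orthogonal B"
    "\<forall>x\<in>B. norm x = 1 \<and> (\<forall>M\<in>\<M>. \<exists>\<mu>. M *v x = \<mu> *\<^sub>R x)"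
    using commuting_self_adjoint_orthonormal_eigenbasis[of ?F UNIV] assms(1,2)
    by (auto simp: self_adjoint_symmetric_matrix)
  have "independent B"
    using B(3,4) pairwise_orthogonal_independent by fastforce
  then have "card B = CARD('n)"
    using B(2) dim_span_eq_card_independent[of B] by (simp add: top.extremum_unique)
  then obtain h where h: "bij_betw h (UNIV::'n set) B"
    using finite_same_card_bij[of "UNIV::'n set" B] B(1) by auto
  have hB: "h i \<in> B" for i
    using h by (auto simp: bij_betw_def)
  have h_inj: "h i \<noteq> h j" if "i \<noteq> j" for i j
    using h that by (auto simp: bij_betw_def inj_on_def)
  have "orthogonal_matrix (\<chi> i. h i)"
    unfolding orthogonal_matrix_orthonormal_rows
  proof (intro conjI allI impI)
    show "norm (row i (\<chi> i. h i)) = 1" for i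
      using B(4) hB by (simp add: row_def)
    show "orthogonal (row i (\<chi> i. h i)) (row j (\<chi> i. h i))" if "i \<noteq> j" for i j
      using B(3) hB h_inj[OF that] by (simp add: row_def pairwise_def)
  qed
  moreover have "\<forall>M\<in>\<M>. \<forall>i. \<exists>\<mu>. M *v (\<chi> i. h i) $ i = \<mu> *\<^sub>R (\<chi> i. h i) $ i"
    using B(4) hB by simp
  ultimately show ?thesis by (rule that)
qed

section \<open>Block maps preserving phi\<close>

(* On n = <e3, e4, e5, e6> (coordinates 0..3): omega1 = e^34 + e^56, omega2 = e^35 - e^46 and
   omega3 = e^36 + e^45, a basis of the self-dual 2-forms, so that
   phi = e^127 + e^7 /\ omega1 + e^1 /\ omega2 - e^2 /\ omega3. *)
definition omega1 :: "real^4 \<Rightarrow> real^4 \<Rightarrow> real" where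
  "omega1 x y = x$0*y$1 - x$1*y$0 + x$2*y$3 - x$3*y$2"

definition omega2 :: "real^4 \<Rightarrow> real^4 \<Rightarrow> real" where
  "omega2 x y = x$0*y$2 - x$2*y$0 - x$1*y$3 + x$3*y$1"

definition omega3 :: "real^4 \<Rightarrow> real^4 \<Rightarrow> real" where
  "omega3 x y = x$0*y$3 - x$3*y$0 + x$1*y$2 - x$2*y$1"

lemma phi0_eq_omega:
  "phi0 u v w = wedge3 1 2 7 u v w
    + (fst u$0 * omega1 (snd v) (snd w) - fst v$0 * omega1 (snd u) (snd w) + fst w$0 * omega1 (snd u) (snd v))
    + (fst u$1 * omega2 (snd v) (snd w) - fst v$1 * omega2 (snd u) (snd w) + fst w$1 * omega2 (snd u) (snd v))
    - (fst u$2 * omega3 (snd v) (snd w) - fst v$2 * omega3 (snd u) (snd w) + fst w$2 * omega3 (snd u) (snd v))"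
  by (simp add: phi0_def wedge3_def omega1_def omega2_def omega3_def algebra_simps)

lemma norm_sq_vec4: "(norm (q::real^4))^2 = q$0^2 + q$1^2 + q$2^2 + q$3^2"
  unfolding power2_norm_eq_inner by (simp add: inner_vec_def sum_4_from_0 power2_eq_square)

definition vec4 :: "real \<Rightarrow> real \<Rightarrow> real \<Rightarrow> real \<Rightarrow> real^4" where
  "vec4 a b c d = (\<chi> i. if i = 0 then a else if i = 1 then b else if i = 2 then c else d)"

lemma vec4_nth [simp]:
  "vec4 a b c d $ 0 = a" "vec4 a b c d $ 1 = b" "vec4 a b c d $ 2 = c" "vec4 a b c d $ 3 = d"
  by (simp_all add: vec4_def)

(* With e3, e4, e5, e6 read as the quaternions 1, i, j, k, quat_mat q *v x is the product x * conj q. *)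
definition quat_mat :: "real^4 \<Rightarrow> real^4^4" where
  "quat_mat q = (\<chi> i.
     if i = 0 then vec4 (q$0) (q$1) (q$2) (q$3) else if i = 1 then vec4 (- q$1) (q$0) (- q$3) (q$2)
     else if i = 2 then vec4 (- q$2) (q$3) (q$0) (- q$1) else vec4 (- q$3) (- q$2) (q$1) (q$0))"

lemma quat_mat_mult_vec:
  "quat_mat q *v x = vec4
     (q$0*x$0 + q$1*x$1 + q$2*x$2 + q$3*x$3) (- q$1*x$0 + q$0*x$1 - q$3*x$2 + q$2*x$3)
     (- q$2*x$0 + q$3*x$1 + q$0*x$2 - q$1*x$3) (- q$3*x$0 - q$2*x$1 + q$1*x$2 + q$0*x$3)"
  by (simp add: vec_eq_iff forall_4_from_0 matrix_vector_mult_def sum_4_from_0 quat_mat_def)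

lemma omega_quat_mat:
  "omega1 (quat_mat q *v x) (quat_mat q *v y) = (norm q)^2 * omega1 x y"
  "omega2 (quat_mat q *v x) (quat_mat q *v y) = (norm q)^2 * omega2 x y"
  "omega3 (quat_mat q *v x) (quat_mat q *v y) = (norm q)^2 * omega3 x y"
  unfolding norm_sq_vec4 by (simp_all add: quat_mat_mult_vec omega1_def omega2_def omega3_def
      power2_eq_square algebra_simps)

lemma quat_mat_transpose_mult: "transpose (quat_mat q) ** quat_mat q = (norm q)^2 *\<^sub>R mat 1"
  unfolding norm_sq_vec4
  by (simp add: vec_eq_iff forall_4_from_0 matrix_matrix_mult_def sum_4_from_0 quat_mat_def
      transpose_def mat_def power2_eq_square algebra_simps)

lemma orthogonal_matrix_quat_mat: "norm q = 1 \<Longrightarrow> orthogonal_matrix (quat_mat q)"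
  by (simp add: orthogonal_matrix quat_mat_transpose_mult)

lemma quat_mat_mult_self: "quat_mat q *v q = (norm q)^2 *\<^sub>R axis 0 1"
  unfolding norm_sq_vec4
  by (simp add: vec_eq_iff forall_4_from_0 quat_mat_mult_vec axis_def power2_eq_square)

lemma preserves_phi0_quat_mat:
  assumes "norm q = 1"
  shows "preserves_phi0 (block_map (mat 1) (quat_mat q))"
  unfolding preserves_phi0_def phi0_eq_omega
  by (simp add: block_map_def omega_quat_mat assms wedge3_def)

definition refl3 :: "real^3^3" where
  "refl3 = (\<chi> i j. if i = j then if i = 2 then -1 else 1 else 0)"

lemma refl3_mult_vec: "refl3 *v s = (\<chi> i. if i = 2 then - s $ i else s $ i)"
  by (simp add: vec_eq_iff forall_3_from_0 matrix_vector_mult_def sum_3_from_0 refl3_def)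

lemma refl3_mult_refl3: "refl3 ** refl3 = mat 1"
  by (simp add: vec_eq_iff forall_3_from_0 matrix_matrix_mult_def sum_3_from_0 refl3_def mat_def)

lemma orthogonal_matrix_refl3: "orthogonal_matrix refl3"
proof -
  have "transpose refl3 = refl3"
    by (simp add: vec_eq_iff forall_3_from_0 transpose_def refl3_def)
  then show ?thesis by (simp add: orthogonal_matrix_def refl3_mult_refl3)
qed

lemma det_refl3: "det refl3 = -1"
  by (simp add: det_3 three_eq_zero refl3_def)

definition succ3 :: "3 \<Rightarrow> 4" where
  "succ3 k = (if k = 0 then 1 else if k = 1 then 2 else 3)"

definition pred4 :: "4 \<Rightarrow> 3" where
  "pred4 i = (if i = 1 then 0 else if i = 2 then 1 else 2)"

lemma pred4_succ3 [simp]: "pred4 (succ3 k) = k"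
  using forall_3_from_0[of "\<lambda>k. pred4 (succ3 k) = k"] by (simp add: succ3_def pred4_def)

lemma succ3_neq_0 [simp]: "succ3 k \<noteq> 0"
  using forall_3_from_0[of "\<lambda>k. succ3 k \<noteq> 0"] by (simp add: succ3_def)

lemma succ3_pred4: "i \<noteq> 0 \<Longrightarrow> succ3 (pred4 i) = i"
  using forall_4_from_0[of "\<lambda>i. i \<noteq> 0 \<longrightarrow> succ3 (pred4 i) = i"] by (simp add: succ3_def pred4_def)

definition block_diag1 :: "real^3^3 \<Rightarrow> real^4^4" where
  "block_diag1 Q = (\<chi> i j. if i = 0 \<or> j = 0 then if i = j then 1 else 0 else Q $ pred4 i $ pred4 j)"

lemma block_diag1_nth_succ3 [simp]: "block_diag1 Q $ succ3 k $ succ3 l = Q $ k $ l"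
  by (simp add: block_diag1_def)

lemma block_diag1_inject: "block_diag1 X = block_diag1 Y \<longleftrightarrow> X = Y"
  by (metis block_diag1_nth_succ3 vec_eq_iff)

lemma block_diag1_mult: "block_diag1 X ** block_diag1 Y = block_diag1 (X ** Y)"
  by (simp add: vec_eq_iff forall_4_from_0 matrix_matrix_mult_def sum_3_from_0 sum_4_from_0
      block_diag1_def pred4_def)

lemma transpose_block_diag1: "transpose (block_diag1 X) = block_diag1 (transpose X)"
  by (simp add: vec_eq_iff forall_4_from_0 transpose_def block_diag1_def)

lemma block_diag1_mat_1: "block_diag1 (mat 1) = mat 1"
  by (simp add: vec_eq_iff forall_4_from_0 mat_def block_diag1_def pred4_def)

lemma diagonal_mat_block_diag1:
  assumes "\<And>k l. k \<noteq> l \<Longrightarrow> Q $ k $ l = 0"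
  shows "diagonal_mat (block_diag1 Q)"
  unfolding diagonal_mat_def
proof (intro allI impI)
  fix i j :: 4 assume "i \<noteq> j"
  then have "pred4 i \<noteq> pred4 j" if "i \<noteq> 0" "j \<noteq> 0"
    using that succ3_pred4 by metis
  then show "block_diag1 Q $ i $ j = 0"
    using \<open>i \<noteq> j\<close> assms by (simp add: block_diag1_def)
qed

lemma orthogonal_matrix_block_diag1: "orthogonal_matrix (block_diag1 Q) \<longleftrightarrow> orthogonal_matrix Q"
  by (simp add: orthogonal_matrix transpose_block_diag1 block_diag1_mult
      flip: block_diag1_mat_1 block_diag1_inject)

(* Under the rotations of <e4, e5, e6> fixing e3 that lie in G2, the vectors (x7, x1, -x2) and
   (x4, x5, x6) rotate simultaneously; in these coordinates phi is built from triple products. *)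
definition a_vec :: "pt \<Rightarrow> real^3" where
  "a_vec u = refl3 *v fst u"

definition n_vec :: "pt \<Rightarrow> real^3" where
  "n_vec u = (\<chi> k. snd u $ succ3 k)"

definition beta :: "pt \<Rightarrow> pt \<Rightarrow> real" where
  "beta u v = a_vec u \<bullet> n_vec v - a_vec v \<bullet> n_vec u"

lemma inner_cross3_from_0:
  "x \<bullet> cross3 y z = x$0 * (y$1*z$2 - y$2*z$1) - x$1 * (y$0*z$2 - y$2*z$0) + x$2 * (y$0*z$1 - y$1*z$0)"
  by (simp add: cross3_simps three_eq_zero)

lemma phi0_eq_cross3:
  "phi0 u v w = - (a_vec u \<bullet> cross3 (a_vec v) (a_vec w))
    + (a_vec u \<bullet> cross3 (n_vec v) (n_vec w) + a_vec v \<bullet> cross3 (n_vec w) (n_vec u)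
       + a_vec w \<bullet> cross3 (n_vec u) (n_vec v))
    - (snd u $ 0 * beta v w - snd v $ 0 * beta u w + snd w $ 0 * beta u v)"
  unfolding inner_cross3_from_0
  by (simp add: phi0_def wedge3_def beta_def a_vec_def n_vec_def refl3_mult_vec
      inner_vec_def sum_3_from_0 succ3_def algebra_simps)

lemma a_vec_block_map: "a_vec (block_map (refl3 ** Q ** refl3) P u) = Q *v a_vec u"
  by (simp add: a_vec_def block_map_def matrix_vector_mul_assoc matrix_mul_assoc refl3_mult_refl3)

lemma n_vec_block_map: "n_vec (block_map R (block_diag1 Q) u) = Q *v n_vec u"
  by (simp add: n_vec_def block_map_def vec_eq_iff forall_3_from_0 matrix_vector_mult_def
      sum_3_from_0 sum_4_from_0 block_diag1_def pred4_def succ3_def)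

lemma block_map_block_diag1_nth_0: "snd (block_map R (block_diag1 Q) u) $ 0 = snd u $ 0"
  by (simp add: block_map_def matrix_vector_mult_def sum_4_from_0 block_diag1_def)

lemma inner_cross3_rotation_matrix:
  assumes "rotation_matrix Q"
  shows "(Q *v x) \<bullet> cross3 (Q *v y) (Q *v z) = x \<bullet> cross3 y z"
  using assms by (simp add: cross_rotation_matrix inner_orthogonal_matrix rotation_matrix_def)

lemma preserves_phi0_rotation:
  assumes "rotation_matrix Q"
  shows "preserves_phi0 (block_map (refl3 ** Q ** refl3) (block_diag1 Q))"
proof -
  have "orthogonal_matrix Q" using assms by (simp add: rotation_matrix_def)
  then show ?thesis
    unfolding preserves_phi0_def phi0_eq_cross3 beta_def
    by (simp add: a_vec_block_map n_vec_block_map block_map_block_diag1_nth_0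
        inner_cross3_rotation_matrix[OF assms] inner_orthogonal_matrix)
qed

lemma orthogonal_matrix_fixing_axis_0:
  assumes M: "orthogonal_matrix M" and row0: "M $ 0 = axis 0 1"
  shows "M = block_diag1 (\<chi> k l. M $ succ3 k $ succ3 l)"
proof -
  have "transpose M *v axis 0 1 = axis 0 1"
    using row0 by (simp add: matrix_vector_mult_basis row_def)
  then have "M *v axis 0 1 = axis 0 1"
    using M by (metis matrix_vector_mul_assoc matrix_vector_mul_lid orthogonal_matrix_def)
  then have col0: "M $ i $ 0 = axis 0 1 $ i" for i
    by (simp add: matrix_vector_mult_basis column_def vec_eq_iff)
  show ?thesis
    unfolding vec_eq_iff
    using row0 col0 by (auto simp: block_diag1_def axis_def succ3_pred4)
qed

(* SO(4) = Sp(1) SO(3): P ** transpose (quat_mat (P $ 0)) has first row e3, hence fixes e3. *)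
lemma orthogonal_matrix_quat_decomposition:
  assumes P: "orthogonal_matrix P"
  obtains Q where "orthogonal_matrix Q" and "P = block_diag1 Q ** quat_mat (P $ 0)"
proof -
  let ?U = "quat_mat (P $ 0)"
  have unit: "norm (P $ 0) = 1"
    using P by (simp add: orthogonal_matrix_orthonormal_rows row_def)
  then have U: "orthogonal_matrix ?U" by (rule orthogonal_matrix_quat_mat)
  define M where "M = P ** transpose ?U"
  have M: "orthogonal_matrix M"
    using P U by (simp add: M_def orthogonal_matrix_mul)
  moreover have "M $ 0 = axis 0 1"
    using unit by (simp add: M_def matrix_mult_transpose_nth quat_mat_mult_self)
  ultimately have M_eq: "M = block_diag1 (\<chi> k l. M $ succ3 k $ succ3 l)"
    by (rule orthogonal_matrix_fixing_axis_0)
  show ?thesis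
  proof
    show "orthogonal_matrix (\<chi> k l. M $ succ3 k $ succ3 l)"
      using M M_eq orthogonal_matrix_block_diag1 by metis
    have "P = M ** ?U"
      using U by (simp add: M_def orthogonal_matrix_def flip: matrix_mul_assoc)
    then show "P = block_diag1 (\<chi> k l. M $ succ3 k $ succ3 l) ** ?U"
      using M_eq by simp
  qed
qed

lemma orthogonal_matrix_refl3_conj:
  "orthogonal_matrix Q \<Longrightarrow> orthogonal_matrix (refl3 ** Q ** refl3)"
  by (simp add: orthogonal_matrix_mul orthogonal_matrix_refl3)

lemma preserves_phi0_rotation_quat:
  assumes "rotation_matrix Q" and "norm q = 1"
  shows "preserves_phi0 (block_map (refl3 ** Q ** refl3) (block_diag1 Q ** quat_mat q))"
proof -
  have "block_map (refl3 ** Q ** refl3) (block_diag1 Q ** quat_mat q)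
      = block_map (refl3 ** Q ** refl3) (block_diag1 Q) \<circ> block_map (mat 1) (quat_mat q)"
    by (simp add: fun_eq_iff flip: block_map_mult)
  then show ?thesis
    using preserves_phi0_rotation[OF assms(1)] preserves_phi0_quat_mat[OF assms(2)]
    by (simp add: preserves_phi0_comp)
qed

lemma exists_phi0_stabilizer:
  assumes P: "orthogonal_matrix P"
  obtains D R where "diagonal_mat D" and "orthogonal_matrix D" and "orthogonal_matrix R"
    and "preserves_phi0 (block_map R (D ** P))"
proof -
  obtain Q where Q: "orthogonal_matrix Q" and P_eq: "P = block_diag1 Q ** quat_mat (P $ 0)"
    using P orthogonal_matrix_quat_decomposition by blast
  have unit: "norm (P $ 0) = 1"
    using P by (simp add: orthogonal_matrix_orthonormal_rows row_def)
  consider "det Q = 1" | "det Q = -1"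
    using Q det_orthogonal_matrix by blast
  then show ?thesis
  proof cases
    case 1
    then have "rotation_matrix Q" using Q by (simp add: rotation_matrix_def)
    from preserves_phi0_rotation_quat[OF this unit]
    have "preserves_phi0 (block_map (refl3 ** Q ** refl3) (mat 1 ** P))"
      by (simp flip: P_eq)
    moreover have "diagonal_mat (mat 1)"
      by (simp add: diagonal_mat_def mat_def)
    ultimately show ?thesis
      using that orthogonal_matrix_id orthogonal_matrix_refl3_conj[OF Q] by blast
  next
    case 2
    \<comment> \<open>reversing the last row of P turns Q into the rotation refl3 ** Q\<close>
    have "rotation_matrix (refl3 ** Q)"
      using 2 Q by (simp add: rotation_matrix_def orthogonal_matrix_mul orthogonal_matrix_refl3
          det_mul det_refl3)
    moreover have "block_diag1 refl3 ** P = block_diag1 (refl3 ** Q) ** quat_mat (P $ 0)"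
      by (subst P_eq) (simp add: matrix_mul_assoc block_diag1_mult)
    moreover have "diagonal_mat (block_diag1 refl3)"
      by (rule diagonal_mat_block_diag1) (simp add: refl3_def)
    moreover have "orthogonal_matrix (block_diag1 refl3)"
      by (simp add: orthogonal_matrix_block_diag1 orthogonal_matrix_refl3)
    ultimately show ?thesis
      using that preserves_phi0_rotation_quat[OF _ unit] orthogonal_matrix_refl3_conj
      by (metis rotation_matrix_def)
  qed
qed

section \<open>Diagonal representatives\<close>

(* The ad-matrices of the basis vectors transpose R *v e_k of a, written in the frame of n given by
   the rows of P. *)
definition ad_in_frame ::
  "real^3^3 \<Rightarrow> real^4^4 \<Rightarrow> real^4^4 \<Rightarrow> real^4^4 \<Rightarrow> real^4^4 \<Rightarrow> 3 \<Rightarrow> real^4^4" where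
  "ad_in_frame R P A B C k = P ** Mof A B C (transpose R *v axis k 1) ** transpose P"

lemma linear_Mof: "linear (Mof A B C)"
  by (simp add: linear_iff Mof_def algebra_simps)

lemma linear_expansion_3:
  fixes f :: "real^3 \<Rightarrow> 'a::real_vector"
  assumes "linear f"
  shows "f t = t$0 *\<^sub>R f (axis 0 1) + t$1 *\<^sub>R f (axis 1 1) + t$2 *\<^sub>R f (axis 2 1)"
proof -
  have "t = t$0 *\<^sub>R axis 0 1 + t$1 *\<^sub>R axis 1 1 + t$2 *\<^sub>R axis 2 1"
    by (simp add: vec_eq_iff forall_3_from_0 axis_def)
  then have "f t = f (t$0 *\<^sub>R axis 0 1 + t$1 *\<^sub>R axis 1 1 + t$2 *\<^sub>R axis 2 1)"
    by simp
  also have "\<dots> = t$0 *\<^sub>R f (axis 0 1) + t$1 *\<^sub>R f (axis 1 1) + t$2 *\<^sub>R f (axis 2 1)"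
    using assms by (simp add: linear_add linear_scale)
  finally show ?thesis .
qed

lemma Mof_ad_in_frame:
  assumes "orthogonal_matrix R"
  shows "Mof (ad_in_frame R P A B C 0) (ad_in_frame R P A B C 1) (ad_in_frame R P A B C 2) (R *v s)
    = P ** Mof A B C s ** transpose P"
proof -
  let ?f = "\<lambda>t. P ** Mof A B C (transpose R *v t) ** transpose P"
  have "linear ?f"
    using linear_compose[OF linear_compose[OF matrix_vector_mul_linear[of "transpose R"] linear_Mof]
        linear_matrix_conj[of P "transpose P"]]
    by (simp add: o_def)
  then have "Mof (ad_in_frame R P A B C 0) (ad_in_frame R P A B C 1) (ad_in_frame R P A B C 2) t
      = ?f t" for t
    using linear_expansion_3[of ?f t] by (simp add: Mof_def ad_in_frame_def)
  moreover have "transpose R *v (R *v s) = s"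
    using assms by (simp add: matrix_vector_mul_assoc orthogonal_matrix_def)
  ultimately show ?thesis by simp
qed

lemma sl4_ad_in_frame:
  assumes "orthogonal_matrix P" and "sl4 A" and "sl4 B" and "sl4 C"
  shows "sl4 (ad_in_frame R P A B C k)"
  using assms
  by (simp add: sl4_def ad_in_frame_def trace_orthogonal_conj Mof_def trace_add trace_scaleR)

lemma Mof_mult_common_eigenvector:
  assumes "\<forall>M\<in>{A, B, C}. \<exists>\<mu>. M *v x = \<mu> *\<^sub>R x"
  shows "\<exists>\<mu>. Mof A B C y *v x = \<mu> *\<^sub>R x"
proof -
  obtain a b c where "A *v x = a *\<^sub>R x" "B *v x = b *\<^sub>R x" "C *v x = c *\<^sub>R x"
    using assms by auto
  then have "Mof A B C y *v x = (y$0 * a + y$1 * b + y$2 * c) *\<^sub>R x"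
    by (simp add: Mof_def matrix_vector_mult_add_rdistrib scaleR_add_left
        flip: scaleR_matrix_vector_assoc)
  then show ?thesis by blast
qed

lemma diagonal_mat_ad_in_frame:
  assumes P: "orthogonal_matrix P" and eig: "\<forall>M\<in>{A, B, C}. \<forall>i. \<exists>\<mu>. M *v P $ i = \<mu> *\<^sub>R P $ i"
  shows "diagonal_mat (ad_in_frame R P A B C k)"
  unfolding diagonal_mat_def ad_in_frame_def
proof (intro allI impI)
  fix i j :: 4 assume "i \<noteq> j"
  obtain \<mu> where "Mof A B C (transpose R *v axis k 1) *v P $ j = \<mu> *\<^sub>R P $ j"
    using Mof_mult_common_eigenvector eig by blast
  moreover have "P $ i \<bullet> P $ j = 0"
    using P \<open>i \<noteq> j\<close> by (simp add: orthogonal_matrix_orthonormal_rows row_def orthogonal_def)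
  ultimately show "(P ** Mof A B C (transpose R *v axis k 1) ** transpose P) $ i $ j = 0"
    by (simp add: matrix_conj_transpose_nth)
qed

lemma G2_equivalent_to_diagonal:
  assumes "sl4 A" and "sl4 B" and "sl4 C"
    and R: "orthogonal_matrix R" and P: "orthogonal_matrix P"
    and phi0: "preserves_phi0 (block_map R P)"
    and eig: "\<forall>M\<in>{A, B, C}. \<forall>i. \<exists>\<mu>. M *v P $ i = \<mu> *\<^sub>R P $ i"
  shows "\<exists>A1 B1 C1 :: real^4^4.
           sl4 A1 \<and> sl4 B1 \<and> sl4 C1 \<and>
           diagonal_mat A1 \<and> diagonal_mat B1 \<and> diagonal_mat C1 \<and>
           G2_equivalent A B C A1 B1 C1"
proof -
  let ?X = "ad_in_frame R P A B C"
  have "sl4 (?X k)" and "diagonal_mat (?X k)" for k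
    using sl4_ad_in_frame[OF P] diagonal_mat_ad_in_frame[OF P eig] assms(1-3) by blast+
  moreover have "G2_equivalent A B C (?X 0) (?X 1) (?X 2)"
    by (rule G2_equivalent_block_map[OF R P phi0 Mof_ad_in_frame[OF R]])
  ultimately show ?thesis by blast
qed

theorem lemma4p5:
  fixes A B C :: "real^4^4"
  assumes "sl4 A" and "sl4 B" and "sl4 C"
    and "symmetric_mat A" and "symmetric_mat B" and "symmetric_mat C"
    and "commute A B" and "commute A C" and "commute B C"
  shows "\<exists>A1 B1 C1 :: real^4^4.
           sl4 A1 \<and> sl4 B1 \<and> sl4 C1 \<and>
           diagonal_mat A1 \<and> diagonal_mat B1 \<and> diagonal_mat C1 \<and>
           G2_equivalent A B C A1 B1 C1"
proof -
  have "finite {A, B, C}" and "\<forall>M\<in>{A, B, C}. transpose M = M"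
    and "\<forall>M\<in>{A, B, C}. \<forall>N\<in>{A, B, C}. M ** N = N ** M"
    using assms(4-9) by (auto simp: symmetric_mat_def commute_def)
  then obtain P where P: "orthogonal_matrix P"
    and eig: "\<forall>M\<in>{A, B, C}. \<forall>i. \<exists>\<mu>. M *v P $ i = \<mu> *\<^sub>R P $ i"
    by (rule commuting_symmetric_matrices_orthonormal_eigenrows)
  obtain D R where D: "diagonal_mat D" "orthogonal_matrix D" and R: "orthogonal_matrix R"
    and phi0: "preserves_phi0 (block_map R (D ** P))"
    using exists_phi0_stabilizer[OF P] by blast
  have "orthogonal_matrix (D ** P)"
    using D(2) P by (rule orthogonal_matrix_mul)
  moreover have "\<forall>M\<in>{A, B, C}. \<forall>i. \<exists>\<mu>. M *v (D ** P) $ i = \<mu> *\<^sub>R (D ** P) $ i"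
  proof (intro ballI allI)
    fix M i assume "M \<in> {A, B, C}"
    then obtain \<mu> where "M *v P $ i = \<mu> *\<^sub>R P $ i" using eig by blast
    then show "\<exists>\<mu>. M *v (D ** P) $ i = \<mu> *\<^sub>R (D ** P) $ i"
      by (intro exI[of _ \<mu>]) (simp add: diagonal_mat_mult_nth[OF D(1)] matrix_vector_mult_scaleR)
  qed
  ultimately show ?thesis
    using G2_equivalent_to_diagonal assms(1-3) R phi0 by blast
qed

end
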